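(* Let $K$ be a field of characteristic zero. Suppose $F,G,H,E,\tilde E\in K[X]\setminus K$ and degree-one polynomials $a,b,c,\tilde a,\tilde b,\tilde c\in K[X]$ satisfy $F=E\circ H\circ a$, $G=E\circ c\circ H\circ b$, $F^t=\tilde E\circ H\circ\tilde a$, and $G^t=\tilde E\circ\tilde c\circ H\circ\tilde b$ for some integer $t>1$. Then there is a degree-one $e\in K[X]$ such that $F^{t-1}=G^{t-1}\circ e$.
   Context: $F^t$ denotes the $t$-th iterate of $F$ under composition $\circ$. *)

theory Defs
  imports "HOL-Computational_Algebra.Polynomial"
begin

primrec poly_iter :: "'a::comm_semiring_1 poly \<Rightarrow> nat \<Rightarrow> 'a poly" where
  "poly_iter F 0 = [:0, 1:]"
| "poly_iter F (Suc n) = pcompose F (poly_iter F n)"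

end

theory Submission
  imports Defs
begin

text \<open>
  Since \<open>F\<^sup>t = F\<^sup>t\<^sup>-\<^sup>1 \<circ> F\<close>, both decompositions of \<open>F\<^sup>t\<close> end in an affine image of \<open>H\<close>,
  and likewise for \<open>G\<^sup>t\<close>. The key fact is that \<open>A \<circ> B = C \<circ> D\<close> with \<open>deg B = deg D\<close> forces
  \<open>C = A \<circ> l\<close> for a linear \<open>l\<close>: after an affine change we may write \<open>B = D + R\<close> with
  \<open>0 < deg R < deg D\<close>, and then \<open>A(D + R) - A(D)\<close> has degree
  \<open>(deg A - 1) deg D + deg R\<close> (its top term is \<open>A'(D) R\<close>, nonzero in characteristic zero),
  which is not a multiple of \<open>deg D\<close>, although it equals \<open>(C - A \<circ> l) \<circ> D\<close>.
  Applied twice this gives \<open>E' = F\<^sup>t\<^sup>-\<^sup>1 \<circ> E \<circ> l\<^sub>1\<close> and \<open>E' \<circ> c' = G\<^sup>t\<^sup>-\<^sup>1 \<circ> E \<circ> c \<circ> l\<^sub>2\<close>;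
  eliminating \<open>E'\<close> and applying it a third time yields \<open>F\<^sup>t\<^sup>-\<^sup>1 = G\<^sup>t\<^sup>-\<^sup>1 \<circ> e\<close>.
\<close>

lemma degree_add_eq_lead_coeff_add:
  fixes p q :: "'a::comm_monoid_add poly"
  assumes "degree p = n" "degree q = n" "lead_coeff p + lead_coeff q \<noteq> 0"
  shows "degree (p + q) = n \<and> lead_coeff (p + q) = lead_coeff p + lead_coeff q"
proof -
  have "coeff (p + q) n \<noteq> 0" using assms by simp
  then have "n \<le> degree (p + q)" by (rule le_degree)
  moreover have "degree (p + q) \<le> n" using assms by (intro degree_add_le) simp_all
  ultimately show ?thesis using assms by simp
qed

lemma degree_pcompose_add_minus_pcompose:
  fixes A D R :: "'a::{idom,ring_char_0} poly"
  assumes R: "degree R < degree D" "R \<noteq> 0" and A: "degree A > 0"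
  shows "degree (pcompose A (D + R) - pcompose A D) = (degree A - 1) * degree D + degree R
    \<and> lead_coeff (pcompose A (D + R) - pcompose A D)
        = of_nat (degree A) * lead_coeff A * lead_coeff D ^ (degree A - 1) * lead_coeff R"
  using A
proof (induction A rule: pCons_induct)
  case 0
  then show ?case by simp
next
  case (pCons a A0)
  have A0: "A0 \<noteq> 0" using pCons by auto
  have D0: "D \<noteq> 0" using R by auto
  have DR: "degree (D + R) = degree D" "lead_coeff (D + R) = lead_coeff D"
    using degree_add_eq_left[OF R(1)] lead_coeff_add_le[OF R(1)] by (simp_all add: add.commute)
  have step: "pcompose (pCons a A0) (D + R) - pcompose (pCons a A0) D
      = D * (pcompose A0 (D + R) - pcompose A0 D) + R * pcompose A0 (D + R)"
    by (simp add: pcompose_pCons algebra_simps)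
  show ?case
  proof (cases "degree A0 = 0")
    case True
    then obtain k where "A0 = [:k:]" "k \<noteq> 0" using A0 by (metis degree_eq_zeroE pCons_0_0)
    then show ?thesis unfolding step by simp
  next
    case False
    define k where "k = degree A0"
    define \<Delta> where "\<Delta> = pcompose A0 (D + R) - pcompose A0 D"
    have IH: "degree \<Delta> = (k - 1) * degree D + degree R"
      "lead_coeff \<Delta> = of_nat k * lead_coeff A0 * lead_coeff D ^ (k - 1) * lead_coeff R"
      using pCons.IH False by (auto simp: \<Delta>_def k_def)
    have nz: "lead_coeff A0 \<noteq> 0" "lead_coeff D \<noteq> 0" "lead_coeff R \<noteq> 0"
      using A0 D0 R by auto
    then have "\<Delta> \<noteq> 0" using IH(2) False by (auto simp: k_def)
    have k: "k = Suc (k - 1)" using False by (simp add: k_def)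
    have "degree (D * \<Delta>) = k * degree D + degree R"
      using degree_mult_eq[OF D0 \<open>\<Delta> \<noteq> 0\<close>] IH(1) by (subst k) simp
    moreover have "degree (R * pcompose A0 (D + R)) = k * degree D + degree R"
      using R D0 A0 DR by (simp add: degree_mult_eq degree_pcompose pcompose_eq_0_iff k_def)
    moreover have "lead_coeff (D * \<Delta>) + lead_coeff (R * pcompose A0 (D + R))
        = of_nat (Suc k) * lead_coeff A0 * lead_coeff D ^ k * lead_coeff R"
    proof -
      have "lead_coeff D ^ k = lead_coeff D * lead_coeff D ^ (k - 1)" by (subst k) simp
      then show ?thesis
        using R DR IH(2) by (simp add: lead_coeff_mult lead_coeff_comp k_def algebra_simps)
    qed
    moreover have "of_nat (Suc k) * lead_coeff A0 * lead_coeff D ^ k * lead_coeff R \<noteq> 0"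
      using nz by (simp del: of_nat_Suc)
    ultimately show ?thesis
      using degree_add_eq_lead_coeff_add[of "D * \<Delta>" _ "R * pcompose A0 (D + R)"]
      unfolding step \<Delta>_def[symmetric] using A0 by (simp add: k_def)
  qed
qed

lemma affine_pcompose_matches_top_and_constant:
  fixes B D :: "'a::field poly"
  assumes "degree B = degree D" "degree D > 0"
  obtains l where "degree l = 1" "degree (B - pcompose l D) < degree D"
    "coeff (B - pcompose l D) 0 = 0"
proof -
  define \<alpha> where "\<alpha> = lead_coeff B / lead_coeff D"
  define l where "l = [:coeff B 0 - \<alpha> * coeff D 0, \<alpha>:]"
  have "D \<noteq> 0" "B \<noteq> 0" using assms by auto
  then have D0: "lead_coeff D \<noteq> 0" "lead_coeff B \<noteq> 0" by simp_all
  then have "\<alpha> \<noteq> 0" by (simp add: \<alpha>_def)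
  have lD: "pcompose l D = [:coeff B 0 - \<alpha> * coeff D 0:] + smult \<alpha> D"
    by (simp add: l_def pcompose_pCons)
  have "degree (B - pcompose l D) \<le> degree D"
    using assms \<open>\<alpha> \<noteq> 0\<close> by (intro degree_diff_le) (simp_all add: lD degree_add_eq_right)
  moreover have "coeff (B - pcompose l D) (degree D) = 0"
    using assms D0 by (cases "degree D") (simp_all add: lD \<alpha>_def)
  ultimately have "degree (B - pcompose l D) < degree D"
    by (metis le_neq_implies_less leading_coeff_0_iff assms(2) degree_0)
  moreover have "coeff (B - pcompose l D) 0 = 0" by (simp add: lD)
  moreover have "degree l = 1" using \<open>\<alpha> \<noteq> 0\<close> by (simp add: l_def)
  ultimately show thesis using that by blast
qed

lemma pcompose_eq_imp_left_factor_linear: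
  fixes A B C D :: "'a::field_char_0 poly"
  assumes eq: "pcompose A B = pcompose C D" and deg: "degree B = degree D"
    and D: "degree D > 0" and A: "degree A > 0"
  obtains l where "degree l = 1" "C = pcompose A l"
proof -
  obtain l where l: "degree l = 1" and rest: "degree (B - pcompose l D) < degree D"
    "coeff (B - pcompose l D) 0 = 0"
    using affine_pcompose_matches_top_and_constant[OF deg D] by blast
  define D' R where "D' = pcompose l D" and "R = B - D'"
  have dD': "degree D' = degree D" using l by (simp add: D'_def degree_pcompose)
  have diff: "pcompose A (D' + R) - pcompose A D' = pcompose (C - pcompose A l) D"
    using eq by (simp add: R_def D'_def pcompose_diff pcompose_assoc)
  have "R = 0"
  proof (rule ccontr)
    assume "R \<noteq> 0"
    moreover from this rest have "degree R > 0"
      by (metis R_def D'_def gr0I leading_coeff_0_iff)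
    moreover have "(degree A - 1) * degree D + degree R = degree (C - pcompose A l) * degree D"
      using degree_pcompose_add_minus_pcompose[of R D' A] \<open>R \<noteq> 0\<close> rest A dD'
      unfolding diff by (simp add: R_def D'_def degree_pcompose)
    then have "degree D dvd degree R"
      by (metis dvd_add_right_iff dvd_triv_right)
    ultimately show False
      using rest(1) by (simp add: R_def D'_def nat_dvd_not_less)
  qed
  then have "pcompose (C - pcompose A l) D = 0"
    using diff by simp
  then have "C = pcompose A l" using pcompose_eq_0 D by fastforce
  with l that show thesis by blast
qed

lemma poly_iter_Suc_right:
  fixes F :: "'a::comm_semiring_1 poly"
  shows "poly_iter F (Suc n) = pcompose (poly_iter F n) F"
  by (induction n) (simp_all add: pcompose_pCons pcompose_assoc)

lemma degree_poly_iter: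
  fixes F :: "'a::{comm_semiring_1,semiring_no_zero_divisors} poly"
  shows "degree (poly_iter F n) = degree F ^ n"
  by (induction n) (simp_all add: degree_pcompose)

theorem lemma3p1:
  fixes F G H E E' a b c a' b' c' :: "'a::field_char_0 poly"
    and t :: nat
  assumes "degree F > 0" "degree G > 0" "degree H > 0" "degree E > 0" "degree E' > 0"
    and "degree a = 1" "degree b = 1" "degree c = 1"
    and "degree a' = 1" "degree b' = 1" "degree c' = 1"
    and "t > 1"
    and "F = pcompose E (pcompose H a)"
    and "G = pcompose E (pcompose c (pcompose H b))"
    and "poly_iter F t = pcompose E' (pcompose H a')"
    and "poly_iter G t = pcompose E' (pcompose c' (pcompose H b'))"
  shows "\<exists>e :: 'a poly. degree e = 1 \<and> poly_iter F (t - 1) = pcompose (poly_iter G (t - 1)) e"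
proof -
  define F\<^sub>s G\<^sub>s where "F\<^sub>s = poly_iter F (t - 1)" and "G\<^sub>s = poly_iter G (t - 1)"
  have t: "t = Suc (t - 1)" using \<open>t > 1\<close> by simp
  have iter: "poly_iter F t = pcompose F\<^sub>s F" "poly_iter G t = pcompose G\<^sub>s G"
    unfolding F\<^sub>s_def G\<^sub>s_def by (subst t, rule poly_iter_Suc_right)+
  have deg: "degree (pcompose F\<^sub>s E) > 0" "degree (pcompose G\<^sub>s (pcompose E c)) > 0"
    "degree (pcompose H a) = degree H" "degree (pcompose H a') = degree H"
    "degree (pcompose H b) = degree H" "degree (pcompose H b') = degree H"
    using assms(1-11) by (simp_all add: F\<^sub>s_def G\<^sub>s_def degree_poly_iter degree_pcompose)
  have "pcompose (pcompose F\<^sub>s E) (pcompose H a) = pcompose E' (pcompose H a')"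
    using assms(13,15) iter by (simp add: pcompose_assoc)
  then obtain l\<^sub>1 where l\<^sub>1: "degree l\<^sub>1 = 1" "E' = pcompose (pcompose F\<^sub>s E) l\<^sub>1"
    using pcompose_eq_imp_left_factor_linear deg assms(3) by metis
  have "pcompose (pcompose G\<^sub>s (pcompose E c)) (pcompose H b)
      = pcompose (pcompose E' c') (pcompose H b')"
    using assms(14,16) iter by (simp add: pcompose_assoc)
  then obtain l\<^sub>2 where l\<^sub>2: "degree l\<^sub>2 = 1"
      "pcompose E' c' = pcompose (pcompose G\<^sub>s (pcompose E c)) l\<^sub>2"
    using pcompose_eq_imp_left_factor_linear deg assms(3) by metis
  have "pcompose G\<^sub>s (pcompose E (pcompose c l\<^sub>2)) = pcompose F\<^sub>s (pcompose E (pcompose l\<^sub>1 c'))"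
    using l\<^sub>1(2) l\<^sub>2(2) by (simp add: pcompose_assoc)
  moreover have "degree (pcompose E (pcompose c l\<^sub>2)) = degree (pcompose E (pcompose l\<^sub>1 c'))"
    "degree (pcompose E (pcompose l\<^sub>1 c')) > 0" "degree G\<^sub>s > 0"
    using assms(2,4,8,11) l\<^sub>1(1) l\<^sub>2(1) by (simp_all add: G\<^sub>s_def degree_poly_iter degree_pcompose)
  ultimately obtain e where "degree e = 1" "F\<^sub>s = pcompose G\<^sub>s e"
    using pcompose_eq_imp_left_factor_linear by metis
  then show ?thesis unfolding F\<^sub>s_def G\<^sub>s_def by blast
qed

end
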